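(* Let $\Upsilon$ be a satisfiable label cover instance and let $\Gamma=(\tilde G,\tilde H)$ be any instance produced from it by the reduction described in the context. Then there exists an injective map $\varphi:V_{\tilde G}\to V_{\tilde H}$ that maps every edge of $\tilde G$ to an edge of $\tilde H$. Thus $\mathrm{OPT}_{QAP}(\Gamma)=|E_{\tilde G}|$.
   Context: A label cover instance $\Upsilon=(G=(V_G,E_G),\pi,[k])$ consists of a graph $G$ with $n=|V_G|$ vertices and edge set $E_G$, a label set $[k]=\{0,\dots,k-1\}$, and for each edge $(u,v)\in E_G$ a set $\pi_{uv}\subseteq[k]\times[k]$ of accepted label pairs. For a labeling $\Lambda:V_G\to[k]$, $\mathrm{Val}_{LC}(\Upsilon,\Lambda)=\frac{1}{|E_G|}\sum_{(u,v)\in E_G}\mathbf{1}[(\Lambda(u),\Lambda(v))\in\pi_{uv}]$, and $\mathrm{OPT}_{LC}(\Upsilon)=\max_\Lambda \mathrm{Val}_{LC}(\Upsilon,\Lambda)$; $\Upsilon$ is satisfiable if $\mathrm{OPT}_{LC}(\Upsilon)=1$. The reduction: let $N=\lceil n^4|E_G|k^5\rceil$ and $\alpha=1/n$. Set $V_{\tilde G}=V_G\times[N]$ and $V_{\tilde H}=V_G\times[k]\times[N]$. For every edge $(u,v)$ of $G$, independently choose a random set $\mathcal{E}_{uv}\subseteq[N]\times[N]$ containing each pair independently with probability $\alpha$. Let $E_{\tilde G}=\{((u,i),(v,j)):(u,v)\in E_G,(i,j)\in\mathcal{E}_{uv}\}$ and $E_{\tilde H}=\{((u,x,i),(v,y,j)):(u,v)\in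 E_G,(i,j)\in\mathcal{E}_{uv},(x,y)\in\pi_{uv}\}$. For an injective map $\varphi:V_{\tilde G}\to V_{\tilde H}$, $\mathrm{Val}_{QAP}(\Gamma,\varphi)=\sum_{(a,b)\in E_{\tilde G}}\mathbf{1}[(\varphi(a),\varphi(b))\in E_{\tilde H}]$, and $\mathrm{OPT}_{QAP}(\Gamma)$ is the maximum over injective maps. *)

theory Defs
  imports Complex_Main
begin

definition lc_instance :: "'v set \<Rightarrow> ('v \<times> 'v) set \<Rightarrow> ('v \<Rightarrow> 'v \<Rightarrow> (nat \<times> nat) set) \<Rightarrow> nat \<Rightarrow> bool" where
  "lc_instance V E \<pi> k \<longleftrightarrow> finite V \<and> E \<subseteq> V \<times> V \<and> 0 < k \<and>
     (\<forall>(u,v)\<in>E. \<pi> u v \<subseteq> {..<k} \<times> {..<k})"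

text \<open>Labelings V \<rightarrow> [k], taken extensional (value 0 outside V) so that there are finitely many.\<close>
definition labelings :: "'v set \<Rightarrow> nat \<Rightarrow> ('v \<Rightarrow> nat) set" where
  "labelings V k = {\<Lambda>. (\<forall>u\<in>V. \<Lambda> u < k) \<and> (\<forall>u. u \<notin> V \<longrightarrow> \<Lambda> u = 0)}"

definition val_LC :: "('v \<times> 'v) set \<Rightarrow> ('v \<Rightarrow> 'v \<Rightarrow> (nat \<times> nat) set) \<Rightarrow> ('v \<Rightarrow> nat) \<Rightarrow> real" where
  "val_LC E \<pi> \<Lambda> = (\<Sum>(u,v)\<in>E. if (\<Lambda> u, \<Lambda> v) \<in> \<pi> u v then 1 else 0) / real (card E)"

definition opt_LC :: "'v set \<Rightarrow> ('v \<times> 'v) set \<Rightarrow> ('v \<Rightarrow> 'v \<Rightarrow> (nat \<times> nat) set) \<Rightarrow> nat \<Rightarrow> real" where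
  "opt_LC V E \<pi> k = Max (val_LC E \<pi> ` labelings V k)"

definition satisfiable_LC :: "'v set \<Rightarrow> ('v \<times> 'v) set \<Rightarrow> ('v \<Rightarrow> 'v \<Rightarrow> (nat \<times> nat) set) \<Rightarrow> nat \<Rightarrow> bool" where
  "satisfiable_LC V E \<pi> k \<longleftrightarrow> opt_LC V E \<pi> k = 1"

definition red_N :: "'v set \<Rightarrow> ('v \<times> 'v) set \<Rightarrow> nat \<Rightarrow> nat" where
  "red_N V E k = nat \<lceil>real (card V) ^ 4 * real (card E) * real k ^ 5\<rceil>"

definition VGt :: "'v set \<Rightarrow> nat \<Rightarrow> ('v \<times> nat) set" where
  "VGt V N = V \<times> {..<N}"

definition VHt :: "'v set \<Rightarrow> nat \<Rightarrow> nat \<Rightarrow> ('v \<times> nat \<times> nat) set" where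
  "VHt V k N = V \<times> {..<k} \<times> {..<N}"

text \<open>\<E> u v is the (random) set \<E>_uv \<subseteq> [N] \<times> [N] chosen for edge (u,v).\<close>
definition EGt :: "('v \<times> 'v) set \<Rightarrow> ('v \<Rightarrow> 'v \<Rightarrow> (nat \<times> nat) set) \<Rightarrow> (('v \<times> nat) \<times> ('v \<times> nat)) set" where
  "EGt E \<E> = {((u,i),(v,j)) | u v i j. (u,v) \<in> E \<and> (i,j) \<in> \<E> u v}"

definition EHt :: "('v \<times> 'v) set \<Rightarrow> ('v \<Rightarrow> 'v \<Rightarrow> (nat \<times> nat) set) \<Rightarrow> ('v \<Rightarrow> 'v \<Rightarrow> (nat \<times> nat) set)
     \<Rightarrow> (('v \<times> nat \<times> nat) \<times> ('v \<times> nat \<times> nat)) set" where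
  "EHt E \<pi> \<E> = {((u,x,i),(v,y,j)) | u v x y i j. (u,v) \<in> E \<and> (i,j) \<in> \<E> u v \<and> (x,y) \<in> \<pi> u v}"

definition val_QAP :: "('a \<times> 'a) set \<Rightarrow> ('b \<times> 'b) set \<Rightarrow> ('a \<Rightarrow> 'b) \<Rightarrow> nat" where
  "val_QAP EG EH \<phi> = card {(a,b) \<in> EG. (\<phi> a, \<phi> b) \<in> EH}"

definition opt_QAP :: "'a set \<Rightarrow> ('a \<times> 'a) set \<Rightarrow> 'b set \<Rightarrow> ('b \<times> 'b) set \<Rightarrow> nat" where
  "opt_QAP VG EG VH EH = Max {val_QAP EG EH \<phi> | \<phi>. inj_on \<phi> VG \<and> \<phi> ` VG \<subseteq> VH}"

end

theory Submission
  imports Defs "HOL-Library.FuncSet"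
begin

text \<open>A satisfying labeling \<Lambda> of the label cover instance yields the map
  \<phi>(u, i) = (u, \<Lambda> u, i). It is injective, and an edge ((u,i),(v,j)) of \<tilde>G has
  (i,j) \<in> \<E>_uv while (\<Lambda> u, \<Lambda> v) \<in> \<pi>_uv, so its image is an edge of \<tilde>H. Since no map
  preserves more than all |E_\<tilde>G| edges, this \<phi> attains the QAP optimum.\<close>

lemma finite_labelings:
  assumes "finite V" shows "finite (labelings V k)"
proof -
  have "inj_on (\<lambda>\<Lambda>. restrict \<Lambda> V) (labelings V k)"
  proof (rule inj_onI, rule ext)
    fix f g x assume "f \<in> labelings V k" "g \<in> labelings V k" "restrict f V = restrict g V"
    then show "f x = g x"
      by (cases "x \<in> V") (auto simp: labelings_def dest: fun_cong[of _ _ x])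
  qed
  moreover have "(\<lambda>\<Lambda>. restrict \<Lambda> V) ` labelings V k \<subseteq> PiE V (\<lambda>_. {..<k})"
    by (auto simp: labelings_def)
  then have "finite ((\<lambda>\<Lambda>. restrict \<Lambda> V) ` labelings V k)"
    by (rule finite_subset) (simp add: assms finite_PiE)
  ultimately show ?thesis by (blast dest: finite_imageD)
qed

lemma labelings_nonempty:
  assumes "0 < k" shows "labelings V k \<noteq> {}"
  using assms by (auto simp: labelings_def intro!: exI[of _ "\<lambda>_. 0"])

lemma val_LC_eq_1_iff:
  assumes "finite E" "E \<noteq> {}"
  shows "val_LC E \<pi> \<Lambda> = 1 \<longleftrightarrow> (\<forall>(u,v)\<in>E. (\<Lambda> u, \<Lambda> v) \<in> \<pi> u v)"
proof -
  define Sat where "Sat = {(u,v) \<in> E. (\<Lambda> u, \<Lambda> v) \<in> \<pi> u v}"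
  have "(\<Sum>(u,v)\<in>E. if (\<Lambda> u, \<Lambda> v) \<in> \<pi> u v then 1 else 0) = real (card Sat)"
    using assms(1) by (simp add: Sat_def sum.If_cases case_prod_unfold Int_def)
  then have "val_LC E \<pi> \<Lambda> = 1 \<longleftrightarrow> card Sat = card E"
    using assms by (auto simp: val_LC_def)
  also have "\<dots> \<longleftrightarrow> Sat = E"
    using assms(1) card_subset_eq[of E Sat] by (auto simp: Sat_def)
  finally show ?thesis by (auto simp: Sat_def)
qed

lemma satisfiable_LC_obtains_labeling:
  assumes "lc_instance V E \<pi> k" and "satisfiable_LC V E \<pi> k"
  obtains \<Lambda> where "\<Lambda> \<in> labelings V k" and "\<forall>(u,v)\<in>E. (\<Lambda> u, \<Lambda> v) \<in> \<pi> u v"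
proof -
  have fin: "finite V" "finite E" and "0 < k"
    using assms(1) finite_subset by (auto simp: lc_instance_def)
  then have "opt_LC V E \<pi> k \<in> val_LC E \<pi> ` labelings V k"
    unfolding opt_LC_def by (intro Max_in) (auto simp: finite_labelings labelings_nonempty)
  then obtain \<Lambda> where \<Lambda>: "\<Lambda> \<in> labelings V k" and val: "val_LC E \<pi> \<Lambda> = 1"
    using assms(2) by (auto simp: satisfiable_LC_def)
  text \<open>For E = {} the value is 0/0 = 0, so a value of 1 forces E to be nonempty.\<close>
  then have "E \<noteq> {}" by (auto simp: val_LC_def)
  with val fin have "\<forall>(u,v)\<in>E. (\<Lambda> u, \<Lambda> v) \<in> \<pi> u v" by (simp add: val_LC_eq_1_iff)
  with \<Lambda> show ?thesis by (rule that)
qed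

lemma val_QAP_le_card:
  assumes "finite EG" shows "val_QAP EG EH \<phi> \<le> card EG"
  unfolding val_QAP_def using assms by (intro card_mono) auto

lemma opt_QAP_eq_card_if_edge_preserving:
  assumes "finite EG" and "inj_on \<phi> VG" and "\<phi> ` VG \<subseteq> VH"
    and "\<forall>(a,b)\<in>EG. (\<phi> a, \<phi> b) \<in> EH"
  shows "opt_QAP VG EG VH EH = card EG"
proof -
  define S where "S = {val_QAP EG EH \<psi> | \<psi>. inj_on \<psi> VG \<and> \<psi> ` VG \<subseteq> VH}"
  have "{(a,b) \<in> EG. (\<phi> a, \<phi> b) \<in> EH} = EG" using assms(4) by auto
  then have "val_QAP EG EH \<phi> = card EG" by (simp add: val_QAP_def)
  then have "card EG \<in> S" using assms(2,3) unfolding S_def by (intro CollectI exI[of _ \<phi>]) simp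
  moreover have "\<forall>x\<in>S. x \<le> card EG" using assms(1) by (auto simp: S_def val_QAP_le_card)
  moreover from this have "finite S" by (auto intro: finite_subset[of S "{..card EG}"])
  ultimately show ?thesis unfolding opt_QAP_def S_def[symmetric] by (intro Max_eqI) auto
qed

definition label_embedding :: "('v \<Rightarrow> nat) \<Rightarrow> 'v \<times> nat \<Rightarrow> 'v \<times> nat \<times> nat" where
  "label_embedding \<Lambda> = (\<lambda>(u,i). (u, \<Lambda> u, i))"

lemma inj_label_embedding: "inj (label_embedding \<Lambda>)"
  by (auto simp: inj_on_def label_embedding_def)

lemma label_embedding_VGt_subset:
  assumes "\<Lambda> \<in> labelings V k"
  shows "label_embedding \<Lambda> ` VGt V N \<subseteq> VHt V k N"
  using assms by (auto simp: label_embedding_def VGt_def VHt_def labelings_def)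

lemma label_embedding_preserves_edges:
  assumes "\<forall>(u,v)\<in>E. (\<Lambda> u, \<Lambda> v) \<in> \<pi> u v"
  shows "\<forall>(a,b)\<in>EGt E \<E>. (label_embedding \<Lambda> a, label_embedding \<Lambda> b) \<in> EHt E \<pi> \<E>"
  using assms by (fastforce simp: EGt_def EHt_def label_embedding_def)

lemma finite_EGt:
  assumes "finite E" and "\<forall>(u,v)\<in>E. finite (\<E> u v)"
  shows "finite (EGt E \<E>)"
proof -
  have "EGt E \<E> = (\<lambda>((u,v),(i,j)). ((u,i),(v,j))) ` Sigma E (\<lambda>(u,v). \<E> u v)"
    by (force simp: EGt_def)
  moreover have "finite (Sigma E (\<lambda>(u,v). \<E> u v))" using assms by auto
  ultimately show ?thesis by simp
qed

theorem mainTheorem5: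
  fixes V :: "'v set" and E :: "('v \<times> 'v) set" and \<pi> :: "'v \<Rightarrow> 'v \<Rightarrow> (nat \<times> nat) set"
    and k :: nat and \<E> :: "'v \<Rightarrow> 'v \<Rightarrow> (nat \<times> nat) set"
  assumes "lc_instance V E \<pi> k"
    and "satisfiable_LC V E \<pi> k"
    and "\<forall>(u,v)\<in>E. \<E> u v \<subseteq> {..<red_N V E k} \<times> {..<red_N V E k}"
  shows "(\<exists>\<phi>. inj_on \<phi> (VGt V (red_N V E k)) \<and> \<phi> ` VGt V (red_N V E k) \<subseteq> VHt V k (red_N V E k)
            \<and> (\<forall>(a,b) \<in> EGt E \<E>. (\<phi> a, \<phi> b) \<in> EHt E \<pi> \<E>))
         \<and> opt_QAP (VGt V (red_N V E k)) (EGt E \<E>) (VHt V k (red_N V E k)) (EHt E \<pi> \<E>)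
             = card (EGt E \<E>)"
proof -
  obtain \<Lambda> where \<Lambda>: "\<Lambda> \<in> labelings V k" and sat: "\<forall>(u,v)\<in>E. (\<Lambda> u, \<Lambda> v) \<in> \<pi> u v"
    using satisfiable_LC_obtains_labeling[OF assms(1,2)] .
  let ?\<phi> = "label_embedding \<Lambda>" and ?N = "red_N V E k"
  have inj: "inj_on ?\<phi> (VGt V ?N)"
    using inj_label_embedding by (rule inj_on_subset) simp
  note img = label_embedding_VGt_subset[OF \<Lambda>]
  note edges = label_embedding_preserves_edges[OF sat, of \<E>]
  have "finite E" using assms(1) finite_subset by (auto simp: lc_instance_def)
  moreover have "\<forall>(u,v)\<in>E. finite (\<E> u v)"
    using assms(3) finite_subset by fastforce
  ultimately have "finite (EGt E \<E>)" by (rule finite_EGt)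
  then have "opt_QAP (VGt V ?N) (EGt E \<E>) (VHt V k ?N) (EHt E \<pi> \<E>) = card (EGt E \<E>)"
    using inj img edges by (rule opt_QAP_eq_card_if_edge_preserving)
  with inj img edges show ?thesis by blast
qed

end
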